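(* Let $\wedge$ be any T-norm. If ${\mathcal R}_A$ is a similarity relation (with respect to $\wedge$) on the alphabet $\mathcal{F}\cup\mathcal{V}$ satisfying the conditions in the context, then the fuzzy relation ${\mathcal R}$ on terms induced by ${\mathcal R}_A$ and $\wedge$ is a similarity relation on terms.
   Context: Simple types are generated by $\tau ::= \delta \mid \tau\to\tau$ over basic types $\delta$. There are disjoint countably infinite sets $\mathcal{V}$ of typed variables and $\mathcal{F}$ of typed constants. Terms are simply typed $\lambda$-terms $t ::= x \mid c \mid \lambda x.t \mid (t_1\,t_2)$ considered modulo $\alpha\beta\eta$; $t\updownarrow_\beta^\eta$ denotes the $\eta$-long $\beta$-normal form. A T-norm $\wedge$ is an associative, commutative, non-decreasing binary operation on $[0,1]$ with unit $1$. A fuzzy relation on a set $S$ is a map $S\times S\to[0,1]$; it is a similarity relation if it is reflexive (${\mathcal R}(s,s)=1$ for all $s$), symmetric, and $\wedge$-transitive (${\mathcal R}(s_1,s_2)\ge {\mathcal R}(s_1,s)\wedge{\mathcal R}(s,s_2)$ for all $s_1,s_2,s$). The fuzzy relation ${\mathcal R}_A$ on $\mathcal{F}\cup\mathcal{V}$ satisfies: ${\mathcal R}_A(x,y)=0$ for distinct variables $x,y$; ${\mathcal R}_A(f,g)=0$ for constants $f,g$ of different types; ${\mathcal R}_A(x,f)={\mathcal R}_A(f,x)=0$ for a variable $x$ and a constant $f$. The induced relation ${\mathcal R}$ on terms is defined, for terms in $\eta$-long $\beta$-normal form, by ${\mathcal R}(a,b)={\mathcal R}_A(a,b)$ for $a,b\in\mathcal{F}\cup\mathcal{V}$;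 ${\mathcal R}((t_1\,s_1),(t_2\,s_2))={\mathcal R}(t_1,t_2)\wedge{\mathcal R}(s_1,s_2)$; ${\mathcal R}(\lambda x.t,\lambda y.s)={\mathcal R}(t\{x\mapsto z\},s\{y\mapsto z\})$ where $x,y,z$ have the same type and $z$ is fresh; ${\mathcal R}(t,s)=0$ otherwise; and for arbitrary terms ${\mathcal R}(t,s)={\mathcal R}(t\updownarrow_\beta^\eta,s\updownarrow_\beta^\eta)$. *)

theory Defs
  imports Complex_Main
begin

datatype 'b ty = Base 'b | Fun "'b ty" "'b ty"

text \<open>Alphabet F \<union> V: typed variables V n \<tau> and typed constants C n \<tau>
  (countably infinitely many of each type, disjoint).\<close>
datatype 'b atom = V nat "'b ty" | C nat "'b ty"

fun atom_ty :: "'b atom \<Rightarrow> 'b ty" where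
  "atom_ty (V _ \<tau>) = \<tau>"
| "atom_ty (C _ \<tau>) = \<tau>"

fun is_var :: "'b atom \<Rightarrow> bool" where
  "is_var (V _ _) = True"
| "is_var (C _ _) = False"

text \<open>Locally nameless terms: bound variables are de Bruijn indices (so terms
  are taken modulo alpha), free variables and constants are atoms.\<close>
datatype 'b trm = Bd nat | At "'b atom" | App "'b trm" "'b trm" | Abs "'b ty" "'b trm"

fun open_rec :: "nat \<Rightarrow> 'b atom \<Rightarrow> 'b trm \<Rightarrow> 'b trm" where
  "open_rec k z (Bd i) = (if i = k then At z else Bd i)"
| "open_rec k z (At a) = At a"
| "open_rec k z (App t s) = App (open_rec k z t) (open_rec k z s)"
| "open_rec k z (Abs T t) = Abs T (open_rec (Suc k) z t)"

definition opn :: "'b trm \<Rightarrow> 'b atom \<Rightarrow> 'b trm" where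
  "opn t z = open_rec 0 z t"

fun tsize :: "'b trm \<Rightarrow> nat" where
  "tsize (Bd i) = 1"
| "tsize (At a) = 1"
| "tsize (App t s) = Suc (tsize t + tsize s)"
| "tsize (Abs T t) = Suc (tsize t)"

lemma tsize_open_rec[simp]: "tsize (open_rec k z t) = tsize t"
  by (induction t arbitrary: k) auto

fun maxv :: "'b trm \<Rightarrow> nat" where
  "maxv (Bd i) = 0"
| "maxv (At (V n _)) = n"
| "maxv (At (C _ _)) = 0"
| "maxv (App t s) = max (maxv t) (maxv s)"
| "maxv (Abs T t) = maxv t"

definition fresh :: "'b trm \<Rightarrow> 'b trm \<Rightarrow> nat" where
  "fresh t s = Suc (max (maxv t) (maxv s))"

text \<open>nf \<Gamma> t \<tau>: t is an eta-long beta-normal term of type \<tau> in bound-variable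
  context \<Gamma>; ne \<Gamma> t \<tau>: t is a head (atom or bound variable) applied to
  eta-long beta-normal arguments.\<close>
inductive nf :: "'b ty list \<Rightarrow> 'b trm \<Rightarrow> 'b ty \<Rightarrow> bool"
  and ne :: "'b ty list \<Rightarrow> 'b trm \<Rightarrow> 'b ty \<Rightarrow> bool" where
  nf_abs: "nf (\<sigma> # \<Gamma>) t \<rho> \<Longrightarrow> nf \<Gamma> (Abs \<sigma> t) (Fun \<sigma> \<rho>)"
| nf_base: "ne \<Gamma> t (Base b) \<Longrightarrow> nf \<Gamma> t (Base b)"
| ne_atom: "atom_ty a = \<tau> \<Longrightarrow> ne \<Gamma> (At a) \<tau>"
| ne_bd: "i < length \<Gamma> \<Longrightarrow> \<Gamma> ! i = \<tau> \<Longrightarrow> ne \<Gamma> (Bd i) \<tau>"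
| ne_app: "ne \<Gamma> t (Fun \<sigma> \<tau>) \<Longrightarrow> nf \<Gamma> s \<sigma> \<Longrightarrow> ne \<Gamma> (App t s) \<tau>"

text \<open>Terms modulo alpha-beta-eta, represented by their (closed w.r.t. bound
  variables) eta-long beta-normal forms.\<close>
definition NF_terms :: "'b trm set" where
  "NF_terms = {t. \<exists>\<tau>. nf [] t \<tau>}"

definition tnorm :: "(real \<Rightarrow> real \<Rightarrow> real) \<Rightarrow> bool" where
  "tnorm T \<longleftrightarrow>
     (\<forall>x\<in>{0..1}. \<forall>y\<in>{0..1}. T x y \<in> {0..1}) \<and>
     (\<forall>x\<in>{0..1}. \<forall>y\<in>{0..1}. \<forall>z\<in>{0..1}. T (T x y) z = T x (T y z)) \<and>
     (\<forall>x\<in>{0..1}. \<forall>y\<in>{0..1}. T x y = T y x) \<and>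
     (\<forall>x\<in>{0..1}. \<forall>x'\<in>{0..1}. \<forall>y\<in>{0..1}. \<forall>y'\<in>{0..1}.
        x \<le> x' \<longrightarrow> y \<le> y' \<longrightarrow> T x y \<le> T x' y') \<and>
     (\<forall>x\<in>{0..1}. T x 1 = x)"

definition fuzzy_rel :: "'a set \<Rightarrow> ('a \<Rightarrow> 'a \<Rightarrow> real) \<Rightarrow> bool" where
  "fuzzy_rel S R \<longleftrightarrow> (\<forall>s1\<in>S. \<forall>s2\<in>S. R s1 s2 \<in> {0..1})"

definition similarity :: "(real \<Rightarrow> real \<Rightarrow> real) \<Rightarrow> 'a set \<Rightarrow> ('a \<Rightarrow> 'a \<Rightarrow> real) \<Rightarrow> bool" where
  "similarity T S R \<longleftrightarrow> fuzzy_rel S R \<and>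
     (\<forall>s\<in>S. R s s = 1) \<and>
     (\<forall>s1\<in>S. \<forall>s2\<in>S. R s1 s2 = R s2 s1) \<and>
     (\<forall>s1\<in>S. \<forall>s2\<in>S. \<forall>s\<in>S. R s1 s2 \<ge> T (R s1 s) (R s s2))"

function (sequential) Rt :: "(real \<Rightarrow> real \<Rightarrow> real) \<Rightarrow> ('b atom \<Rightarrow> 'b atom \<Rightarrow> real)
    \<Rightarrow> 'b trm \<Rightarrow> 'b trm \<Rightarrow> real" where
  "Rt T RA (At a) (At b) = RA a b"
| "Rt T RA (App t1 s1) (App t2 s2) = T (Rt T RA t1 t2) (Rt T RA s1 s2)"
| "Rt T RA (Abs \<sigma> t) (Abs \<rho> s) =
     (if \<sigma> = \<rho> then
        (let z = V (fresh t s) \<sigma> in Rt T RA (opn t z) (opn s z))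
      else 0)"
| "Rt T RA _ _ = 0"
  by pat_completeness auto
termination
  by (relation "measure (\<lambda>(T, RA, t, s). tsize t)") (auto simp: opn_def)

end

theory Submission
  imports Defs "HOL-Combinatorics.Transposition"
begin

text \<open>Range, symmetry and reflexivity (on terms without dangling bound indices, such as
  normal forms) follow componentwise by induction on terms.  Transitivity is the delicate case:
  \<open>Rt\<close> opens the bodies of two abstractions with a variable that is fresh for that particular
  pair, so for three abstractions the two comparisons use different variables.  Since the
  similarity on atoms only tells variables apart by being equal or not, it is invariant under
  swapping variable names, and hence so is \<open>Rt\<close>; consequently any variable fresh for both
  bodies may be used to open them, and one variable fresh for all three bodies makes the
  induction go through.\<close>

lemma tnorm_range: "tnorm T \<Longrightarrow> x \<in> {0..1} \<Longrightarrow> y \<in> {0..1} \<Longrightarrow> T x y \<in> {0..1}"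
  and tnorm_commute: "tnorm T \<Longrightarrow> x \<in> {0..1} \<Longrightarrow> y \<in> {0..1} \<Longrightarrow> T x y = T y x"
  and tnorm_assoc: "tnorm T \<Longrightarrow> x \<in> {0..1} \<Longrightarrow> y \<in> {0..1} \<Longrightarrow> z \<in> {0..1} \<Longrightarrow>
    T (T x y) z = T x (T y z)"
  and tnorm_mono: "tnorm T \<Longrightarrow> x \<in> {0..1} \<Longrightarrow> x' \<in> {0..1} \<Longrightarrow> y \<in> {0..1} \<Longrightarrow> y' \<in> {0..1} \<Longrightarrow>
    x \<le> x' \<Longrightarrow> y \<le> y' \<Longrightarrow> T x y \<le> T x' y'"
  and tnorm_one_right: "tnorm T \<Longrightarrow> x \<in> {0..1} \<Longrightarrow> T x 1 = x"
  unfolding tnorm_def by blast+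

lemma tnorm_zero_right:
  assumes "tnorm T" and "x \<in> {0..1}"
  shows "T x 0 = 0"
proof -
  have "T x 0 \<le> T 1 0"
    using assms by (intro tnorm_mono[OF assms(1)]) auto
  also have "T 1 0 = 0"
    using assms(1) tnorm_commute[of T 1 0] tnorm_one_right[of T 0] by simp
  finally show ?thesis
    using tnorm_range[OF assms, of 0] by simp
qed

lemma tnorm_zero_left: "tnorm T \<Longrightarrow> x \<in> {0..1} \<Longrightarrow> T 0 x = 0"
  using tnorm_commute[of T 0 x] tnorm_zero_right[of T x] by simp

lemma tnorm_rearrange:
  assumes T: "tnorm T" and "a \<in> {0..1}" "b \<in> {0..1}" "c \<in> {0..1}" "d \<in> {0..1}"
  shows "T (T a b) (T c d) = T (T a c) (T b d)"
proof -
  note facts = assms tnorm_range[OF T] tnorm_assoc[OF T]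
  have "T (T a b) (T c d) = T a (T (T b c) d)"
    using facts by simp
  also have "T b c = T c b"
    using assms by (simp add: tnorm_commute)
  also have "T a (T (T c b) d) = T (T a c) (T b d)"
    using facts by simp
  finally show ?thesis .
qed

lemma tnorm_product_le:
  assumes T: "tnorm T"
    and "a \<in> {0..1}" "b \<in> {0..1}" "c \<in> {0..1}" "d \<in> {0..1}" "e \<in> {0..1}" "f \<in> {0..1}"
    and "T a b \<le> e" "T c d \<le> f"
  shows "T (T a c) (T b d) \<le> T e f"
proof -
  have "T (T a c) (T b d) = T (T a b) (T c d)"
    using assms by (simp add: tnorm_rearrange)
  also have "\<dots> \<le> T e f"
    using assms by (intro tnorm_mono[OF T] tnorm_range[OF T])
  finally show ?thesis .
qed

fun rename_atom :: "(nat \<Rightarrow> nat) \<Rightarrow> 'b atom \<Rightarrow> 'b atom" where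
  "rename_atom f (V n \<tau>) = V (f n) \<tau>"
| "rename_atom f (C n \<tau>) = C n \<tau>"

fun rename :: "(nat \<Rightarrow> nat) \<Rightarrow> 'b trm \<Rightarrow> 'b trm" where
  "rename f (Bd i) = Bd i"
| "rename f (At a) = At (rename_atom f a)"
| "rename f (App t s) = App (rename f t) (rename f s)"
| "rename f (Abs \<sigma> t) = Abs \<sigma> (rename f t)"

fun fvars :: "'b trm \<Rightarrow> nat set" where
  "fvars (Bd i) = {}"
| "fvars (At (V n \<tau>)) = {n}"
| "fvars (At (C n \<tau>)) = {}"
| "fvars (App t s) = fvars t \<union> fvars s"
| "fvars (Abs \<sigma> t) = fvars t"

lemma tsize_rename [simp]: "tsize (rename f t) = tsize t"
  by (induction t) auto

lemma rename_open_rec: "rename f (open_rec k z t) = open_rec k (rename_atom f z) (rename f t)"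
  by (induction t arbitrary: k) auto

lemma fvars_rename: "fvars (rename f t) = f ` fvars t"
proof (induction t)
  case (At a) then show ?case by (cases a) auto
qed auto

lemma rename_fixing_fvars: "(\<And>n. n \<in> fvars t \<Longrightarrow> f n = n) \<Longrightarrow> rename f t = t"
proof (induction t)
  case (At a) then show ?case by (cases a) auto
qed auto

lemma rename_transpose_fresh: "a \<notin> fvars t \<Longrightarrow> b \<notin> fvars t \<Longrightarrow> rename (transpose a b) t = t"
  by (metis rename_fixing_fvars transpose_apply_other)

lemma fvars_le_maxv: "n \<in> fvars t \<Longrightarrow> n \<le> maxv t"
proof (induction t)
  case (At a) then show ?case by (cases a) auto
qed auto

lemma fresh_notin_fvars: "fresh t s \<notin> fvars t" "fresh t s \<notin> fvars s"
  using fvars_le_maxv unfolding fresh_def by fastforce+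

lemma rename_atom_invariant:
  assumes refl: "\<And>x. RA x x = 1"
    and var_var: "\<And>x y. is_var x \<Longrightarrow> is_var y \<Longrightarrow> x \<noteq> y \<Longrightarrow> RA x y = 0"
    and var_const: "\<And>x f. is_var x \<Longrightarrow> \<not> is_var f \<Longrightarrow> RA x f = 0 \<and> RA f x = 0"
    and "inj f"
  shows "RA (rename_atom f x) (rename_atom f y) = RA x y"
proof -
  have is_var_rename: "is_var (rename_atom f z) = is_var z" for z
    by (cases z) auto
  have rename_const: "rename_atom f z = z" if "\<not> is_var z" for z
    using that by (cases z) auto
  have rename_eq_iff: "rename_atom f x = rename_atom f y \<longleftrightarrow> x = y"
    using \<open>inj f\<close> by (cases x; cases y) (auto dest: injD)
  consider "is_var x" "is_var y" | "\<not> is_var x" "\<not> is_var y" | "is_var x \<noteq> is_var y"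
    by blast
  then show ?thesis
  proof cases
    case 1
    then show ?thesis
      using is_var_rename rename_eq_iff refl var_var by metis
  next
    case 2
    then show ?thesis
      by (simp add: rename_const)
  next
    case 3
    then show ?thesis
      using is_var_rename var_const by metis
  qed
qed

locale swap_invariant_atoms =
  fixes RA :: "'b atom \<Rightarrow> 'b atom \<Rightarrow> real"
  assumes RA_rename_transpose:
    "RA (rename_atom (transpose a b) x) (rename_atom (transpose a b) y) = RA x y"
begin

lemma Rt_rename_transpose:
  "Rt T RA (rename (transpose a b) t) (rename (transpose a b) s) = Rt T RA t s"
proof (induction t arbitrary: s a b rule: measure_induct_rule[where f = tsize])
  case (less t)
  show ?case
  proof (cases t; cases s)
    fix t1 t2 s1 s2 assume "t = App t1 t2" "s = App s1 s2"
    then show ?thesis using less[of t1] less[of t2] by simp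
  next
    fix \<sigma> t0 \<rho> s0
    assume t: "t = Abs \<sigma> t0" and s: "s = Abs \<rho> s0"
    show ?thesis
    proof (cases "\<sigma> = \<rho>")
      case True
      have IH: "Rt T RA (rename (transpose a' b') u) (rename (transpose a' b') v) = Rt T RA u v"
        if "tsize u = tsize t0" for u v a' b'
        using less that t by simp
      have change_fresh: "Rt T RA (opn u (V m \<sigma>)) (opn v (V m \<sigma>))
          = Rt T RA (opn u (V m' \<sigma>)) (opn v (V m' \<sigma>))"
        if "tsize u = tsize t0" "m \<notin> fvars u \<union> fvars v" "m' \<notin> fvars u \<union> fvars v" for u v m m'
      proof -
        have "Rt T RA (opn u (V m \<sigma>)) (opn v (V m \<sigma>)) = Rt T RA
            (rename (transpose m m') (opn u (V m \<sigma>))) (rename (transpose m m') (opn v (V m \<sigma>)))"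
          using that(1) by (simp add: IH opn_def)
        also have "\<dots> = Rt T RA (opn u (V m' \<sigma>)) (opn v (V m' \<sigma>))"
          using that(2,3) by (simp add: opn_def rename_open_rec rename_transpose_fresh)
        finally show ?thesis .
      qed
      let ?\<pi> = "rename (transpose a b)"
      define n where "n = fresh t0 s0"
      have n_fresh: "transpose a b n \<notin> fvars (?\<pi> t0) \<union> fvars (?\<pi> s0)"
        using fresh_notin_fvars[of t0 s0] by (simp add: n_def fvars_rename in_transpose_image_iff)
      have "Rt T RA (?\<pi> t) (?\<pi> s) = Rt T RA (opn (?\<pi> t0) (V (fresh (?\<pi> t0) (?\<pi> s0)) \<sigma>))
          (opn (?\<pi> s0) (V (fresh (?\<pi> t0) (?\<pi> s0)) \<sigma>))"
        using t s True by (simp add: Let_def)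
      also have "\<dots> = Rt T RA (opn (?\<pi> t0) (V (transpose a b n) \<sigma>)) (opn (?\<pi> s0) (V (transpose a b n) \<sigma>))"
        using n_fresh fresh_notin_fvars by (intro change_fresh) auto
      also have "\<dots> = Rt T RA (?\<pi> (opn t0 (V n \<sigma>))) (?\<pi> (opn s0 (V n \<sigma>)))"
        by (simp add: opn_def rename_open_rec)
      also have "\<dots> = Rt T RA (opn t0 (V n \<sigma>)) (opn s0 (V n \<sigma>))"
        by (simp add: IH opn_def)
      also have "\<dots> = Rt T RA t s"
        using t s True by (simp add: Let_def n_def)
      finally show ?thesis .
    qed (use t s in simp)
  qed (simp_all add: RA_rename_transpose)
qed

lemma Rt_Abs_Abs_open_fresh:
  assumes "m \<notin> fvars t" "m \<notin> fvars s"
  shows "Rt T RA (Abs \<sigma> t) (Abs \<sigma> s) = Rt T RA (opn t (V m \<sigma>)) (opn s (V m \<sigma>))"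
proof -
  let ?n = "fresh t s"
  have "Rt T RA (Abs \<sigma> t) (Abs \<sigma> s) = Rt T RA (opn t (V ?n \<sigma>)) (opn s (V ?n \<sigma>))"
    by (simp add: Let_def)
  also have "\<dots> = Rt T RA (rename (transpose ?n m) (opn t (V ?n \<sigma>)))
      (rename (transpose ?n m) (opn s (V ?n \<sigma>)))"
    by (rule Rt_rename_transpose[symmetric])
  also have "\<dots> = Rt T RA (opn t (V m \<sigma>)) (opn s (V m \<sigma>))"
    using rename_transpose_fresh[OF fresh_notin_fvars(1) assms(1)]
      rename_transpose_fresh[OF fresh_notin_fvars(2) assms(2)]
    by (simp add: opn_def rename_open_rec)
  finally show ?thesis .
qed

end

fun lc_at :: "nat \<Rightarrow> 'b trm \<Rightarrow> bool" where
  "lc_at k (Bd i) = (i < k)"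
| "lc_at k (At a) = True"
| "lc_at k (App t s) = (lc_at k t \<and> lc_at k s)"
| "lc_at k (Abs \<sigma> t) = lc_at (Suc k) t"

lemma lc_at_open_rec: "lc_at (Suc k) t \<Longrightarrow> lc_at k (open_rec k z t)"
  by (induction t arbitrary: k) auto

lemma nf_lc_at: "nf \<Gamma> t \<tau> \<Longrightarrow> lc_at (length \<Gamma>) t"
  and ne_lc_at: "ne \<Gamma> t \<tau> \<Longrightarrow> lc_at (length \<Gamma>) t"
  by (induction rule: nf_ne.inducts) auto

lemma NF_terms_lc_at: "t \<in> NF_terms \<Longrightarrow> lc_at 0 t"
  unfolding NF_terms_def using nf_lc_at[of "[]"] by fastforce

locale atom_similarity =
  fixes T :: "real \<Rightarrow> real \<Rightarrow> real"
    and RA :: "'b atom \<Rightarrow> 'b atom \<Rightarrow> real"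
  assumes tnorm: "tnorm T"
    and similarity: "similarity T UNIV RA"
begin

lemma RA_range: "RA x y \<in> {0..1}"
  and RA_refl: "RA x x = 1"
  and RA_sym: "RA x y = RA y x"
  and RA_trans: "T (RA x z) (RA z y) \<le> RA x y"
  using similarity unfolding similarity_def fuzzy_rel_def by blast+

lemma Rt_range: "Rt T RA t s \<in> {0..1}"
proof (induction t arbitrary: s rule: measure_induct_rule[where f = tsize])
  case (less t)
  show ?case
  proof (cases t; cases s)
    fix t1 t2 s1 s2 assume "t = App t1 t2" "s = App s1 s2"
    then show ?thesis using less[of t1] less[of t2] tnorm_range[OF tnorm] by simp
  next
    fix \<sigma> t0 \<rho> s0 assume "t = Abs \<sigma> t0" "s = Abs \<rho> s0"
    then show ?thesis using less[of "opn t0 (V (fresh t0 s0) \<sigma>)"]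
      by (cases "\<sigma> = \<rho>") (simp_all add: Let_def opn_def)
  qed (use RA_range in auto)
qed

lemma Rt_sym: "Rt T RA t s = Rt T RA s t"
proof (induction t arbitrary: s rule: measure_induct_rule[where f = tsize])
  case (less t)
  show ?case
  proof (cases t; cases s)
    fix t1 t2 s1 s2 assume "t = App t1 t2" "s = App s1 s2"
    then show ?thesis using less[of t1] less[of t2] tnorm_commute[OF tnorm] Rt_range by simp
  next
    fix \<sigma> t0 \<rho> s0 assume "t = Abs \<sigma> t0" "s = Abs \<rho> s0"
    then show ?thesis using less[of "opn t0 (V (fresh t0 s0) \<sigma>)"]
      by (simp add: Let_def opn_def fresh_def max.commute)
  qed (auto simp: RA_sym)
qed

lemma Rt_refl: "lc_at 0 t \<Longrightarrow> Rt T RA t t = 1"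
proof (induction t rule: measure_induct_rule[where f = tsize])
  case (less t)
  show ?case
  proof (cases t)
    case (App t1 t2)
    then show ?thesis using less tnorm_one_right[OF tnorm, of 1] by simp
  next
    case (Abs \<sigma> t0)
    then show ?thesis using less lc_at_open_rec[of 0 t0] by (simp add: Let_def opn_def)
  qed (use less.prems in \<open>auto simp: RA_refl\<close>)
qed

end

locale term_similarity = atom_similarity + swap_invariant_atoms
begin

lemma Rt_trans: "T (Rt T RA t1 t2) (Rt T RA t2 t3) \<le> Rt T RA t1 t3"
proof (induction t1 arbitrary: t2 t3 rule: measure_induct_rule[where f = tsize])
  case (less t1)
  have zero: "T (Rt T RA t1 t2) (Rt T RA t2 t3) \<le> Rt T RA t1 t3"
    if "Rt T RA t1 t2 = 0 \<or> Rt T RA t2 t3 = 0"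
    using that Rt_range tnorm_zero_left[OF tnorm] tnorm_zero_right[OF tnorm] by fastforce
  show ?case
  proof (cases t1; cases t2; cases t3)
    fix a1 a2 a3 assume "t1 = At a1" "t2 = At a2" "t3 = At a3"
    then show ?thesis using RA_trans by simp
  next
    fix u1 v1 u2 v2 u3 v3
    assume "t1 = App u1 v1" "t2 = App u2 v2" "t3 = App u3 v3"
    then show ?thesis
      using less Rt_range by (simp add: tnorm_product_le[OF tnorm])
  next
    fix \<sigma>1 u1 \<sigma>2 u2 \<sigma>3 u3
    assume t: "t1 = Abs \<sigma>1 u1" "t2 = Abs \<sigma>2 u2" "t3 = Abs \<sigma>3 u3"
    show ?thesis
    proof (cases "\<sigma>1 = \<sigma>2 \<and> \<sigma>2 = \<sigma>3")
      case True
      define c where "c = Suc (max (maxv u1) (max (maxv u2) (maxv u3)))"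
      have "c \<notin> fvars u1" "c \<notin> fvars u2" "c \<notin> fvars u3"
        using fvars_le_maxv unfolding c_def by fastforce+
      then have "Rt T RA (Abs \<sigma>1 u) (Abs \<sigma>1 v) = Rt T RA (opn u (V c \<sigma>1)) (opn v (V c \<sigma>1))"
        if "u \<in> {u1, u2, u3}" "v \<in> {u1, u2, u3}" for u v
        using that by (intro Rt_Abs_Abs_open_fresh) auto
      moreover have "T (Rt T RA (opn u1 (V c \<sigma>1)) (opn u2 (V c \<sigma>1)))
          (Rt T RA (opn u2 (V c \<sigma>1)) (opn u3 (V c \<sigma>1))) \<le> Rt T RA (opn u1 (V c \<sigma>1)) (opn u3 (V c \<sigma>1))"
        using t by (intro less) (simp add: opn_def)
      ultimately show ?thesis
        using t True by (simp add: Let_def)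
    qed (use t in \<open>intro zero, auto\<close>)
  qed (rule zero; simp)+
qed

end

theorem theorem1:
  fixes T :: "real \<Rightarrow> real \<Rightarrow> real"
    and RA :: "'b atom \<Rightarrow> 'b atom \<Rightarrow> real"
  assumes "tnorm T"
    and "similarity T UNIV RA"
    and "\<And>x y. is_var x \<Longrightarrow> is_var y \<Longrightarrow> x \<noteq> y \<Longrightarrow> RA x y = 0"
    and "\<And>f g. \<not> is_var f \<Longrightarrow> \<not> is_var g \<Longrightarrow> atom_ty f \<noteq> atom_ty g \<Longrightarrow> RA f g = 0"
    and "\<And>x f. is_var x \<Longrightarrow> \<not> is_var f \<Longrightarrow> RA x f = 0 \<and> RA f x = 0"
  shows "similarity T NF_terms (Rt T RA)"
proof -
  interpret atom_similarity T RA
    using assms(1,2) by unfold_locales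
  interpret term_similarity T RA
    using rename_atom_invariant[OF RA_refl assms(3,5) inj_transpose] by unfold_locales
  show ?thesis
    unfolding similarity_def fuzzy_rel_def
    by (intro conjI ballI Rt_range Rt_refl Rt_sym Rt_trans) (simp add: NF_terms_lc_at)
qed

end
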